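(* Let $1\le r\le s\le t$ and let $u=ABCd$, $v=A'B'C'd'$ be vertices of $E3C(r,s,t)$ with $A=A'$, $B\ne B'$, $C=C'$ and $d\ne d'$. Then there exist $2r+2$ pairwise internally disjoint $u$–$v$ paths in $E3C(r,s,t)$, each of length at most $s+6$ if $\{d,d'\}=\{0,1\}$ or $\{d,d'\}=\{1,2\}$, and each of length at most $s+8$ if $\{d,d'\}=\{0,2\}$.
   Context: The exchanged 3-ary $n$-cube $E3C(r,s,t)$ ($r,s,t\ge1$, $n=r+s+t+1$): vertices are strings written $x=ABCd$ with $A\in\{0,1,2\}^r$, $B\in\{0,1,2\}^s$, $C\in\{0,1,2\}^t$, $d\in\{0,1,2\}$. Two distinct vertices $x=ABCd$, $y=A'B'C'd'$ are adjacent iff one of: (E0) $A=A',B=B',C=C'$ and $d\ne d'$; (E1) $d=d'=0$, $A=A'$, $B=B'$ and $C,C'$ differ in exactly one position; (E2) $d=d'=1$, $A=A'$, $C=C'$ and $B,B'$ differ in exactly one position; (E3) $d=d'=2$, $B=B'$, $C=C'$ and $A,A'$ differ in exactly one position. Paths are internally disjoint if they share no vertices other than their endpoints; length = number of edges. *)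

theory Defs
  imports Main
begin

type_synonym e3v = "nat list \<times> nat list \<times> nat list \<times> nat"

definition tern :: "nat \<Rightarrow> nat list \<Rightarrow> bool" where
  "tern k X \<longleftrightarrow> length X = k \<and> (\<forall>a\<in>set X. a < 3)"

definition e3c_vert :: "nat \<Rightarrow> nat \<Rightarrow> nat \<Rightarrow> e3v \<Rightarrow> bool" where
  "e3c_vert r s t x = (case x of (A, B, C, d) \<Rightarrow>
      tern r A \<and> tern s B \<and> tern t C \<and> d < 3)"

definition differ_one :: "nat list \<Rightarrow> nat list \<Rightarrow> bool" where
  "differ_one X Y \<longleftrightarrow> length X = length Y \<and> card {i. i < length X \<and> X ! i \<noteq> Y ! i} = 1"

definition e3c_adj :: "nat \<Rightarrow> nat \<Rightarrow> nat \<Rightarrow> e3v \<Rightarrow> e3v \<Rightarrow> bool" where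
  "e3c_adj r s t x y = (e3c_vert r s t x \<and> e3c_vert r s t y \<and> x \<noteq> y \<and>
     (case x of (A, B, C, d) \<Rightarrow> case y of (A', B', C', d') \<Rightarrow>
        (A = A' \<and> B = B' \<and> C = C' \<and> d \<noteq> d')
      \<or> (d = 0 \<and> d' = 0 \<and> A = A' \<and> B = B' \<and> differ_one C C')
      \<or> (d = 1 \<and> d' = 1 \<and> A = A' \<and> C = C' \<and> differ_one B B')
      \<or> (d = 2 \<and> d' = 2 \<and> B = B' \<and> C = C' \<and> differ_one A A')))"

definition e3c_path :: "nat \<Rightarrow> nat \<Rightarrow> nat \<Rightarrow> e3v \<Rightarrow> e3v \<Rightarrow> e3v list \<Rightarrow> bool" where
  "e3c_path r s t u v p \<longleftrightarrow> p \<noteq> [] \<and> hd p = u \<and> last p = v \<and> distinct p \<and>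
     (\<forall>x\<in>set p. e3c_vert r s t x) \<and>
     (\<forall>i. Suc i < length p \<longrightarrow> e3c_adj r s t (p ! i) (p ! Suc i))"

definition path_len :: "'a list \<Rightarrow> nat" where
  "path_len p = length p - 1"

definition internally_disjoint :: "'a \<Rightarrow> 'a \<Rightarrow> 'a list set \<Rightarrow> bool" where
  "internally_disjoint u v P \<longleftrightarrow>
     (\<forall>p\<in>P. \<forall>q\<in>P. p \<noteq> q \<longrightarrow> set p \<inter> set q \<subseteq> {u, v})"

end

theory Submission
  imports Defs
begin

text \<open>Each path consists of a walk in layer 1 that turns
  \<open>B\<close> into \<open>B'\<close> (or, for some paths, into a neighbour of \<open>B'\<close>) by correcting one letter at a
  time, hence has at most \<open>s\<close> edges, joined to \<open>u\<close> and \<open>v\<close> by at most six further edges (eight when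
  \<open>{d, d'} = {0, 2}\<close>). Along the walk the strings \<open>A\<close> and \<open>C\<close> are kept fixed at \<open>A\<close>, \<open>C\<close> or one
  of their ternary neighbours, and choosing distinct neighbours for distinct paths makes the
  paths internally disjoint. Besides the walk carrying \<open>A\<close> and \<open>C\<close> themselves, one detour
  through a neighbour of \<open>A\<close> and one through a neighbour of \<open>C\<close>, the remaining \<open>2r - 1\<close> paths
  use distinct neighbours of \<open>C\<close> together with distinct neighbours of \<open>B'\<close> off the walk
  (layers 0 and 1) or of \<open>A\<close> (layers 0 and 2). Layers 1 and 2 reduce to layers 0 and 1 by the
  isomorphism \<open>ABCd \<mapsto> CBA(2 - d)\<close> of \<open>E3C(r,s,t)\<close> onto \<open>E3C(t,s,r)\<close>, and exchanging \<open>u\<close>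
  and \<open>v\<close> reverses paths.\<close>

fun hamming_walk :: "nat list \<Rightarrow> nat list \<Rightarrow> nat list list" where
  "hamming_walk (x # xs) (y # ys) =
     (if x = y then map (Cons x) (hamming_walk xs ys)
      else (x # xs) # map (Cons y) (hamming_walk xs ys))"
| "hamming_walk xs ys = [xs]"

fun hamming_dist :: "nat list \<Rightarrow> nat list \<Rightarrow> nat" where
  "hamming_dist (x # xs) (y # ys) = (if x = y then 0 else 1) + hamming_dist xs ys"
| "hamming_dist xs ys = 0"

lemma hamming_walk_not_Nil [simp]: "hamming_walk X Y \<noteq> []"
  by (induction X Y rule: hamming_walk.induct) simp_all

lemma hd_hamming_walk [simp]: "hd (hamming_walk X Y) = X"
  by (induction X Y rule: hamming_walk.induct) (simp_all add: hd_map)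

lemma last_hamming_walk: "length X = length Y \<Longrightarrow> last (hamming_walk X Y) = Y"
  by (induction X Y rule: hamming_walk.induct) (auto simp: last_map)

lemma ends_in_hamming_walk:
  assumes "length X = length Y"
  shows "X \<in> set (hamming_walk X Y)" "Y \<in> set (hamming_walk X Y)"
  using hd_in_set[of "hamming_walk X Y"] last_in_set[of "hamming_walk X Y"]
  by (simp_all add: last_hamming_walk[OF assms])

lemma length_hamming_walk:
  "length X = length Y \<Longrightarrow> length (hamming_walk X Y) = Suc (hamming_dist X Y)"
  by (induction X Y rule: hamming_walk.induct) simp_all

lemma distinct_hamming_walk: "distinct (hamming_walk X Y)"
  by (induction X Y rule: hamming_walk.induct) (auto simp: distinct_map)

lemma set_hamming_walk:
  "Z \<in> set (hamming_walk X Y) \<Longrightarrow> length X = length Y \<Longrightarrow>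
   length Z = length X \<and> set Z \<subseteq> set X \<union> set Y"
  by (induction X Y arbitrary: Z rule: hamming_walk.induct) (fastforce split: if_splits)+

lemma hamming_dist_le_length: "hamming_dist X Y \<le> length X"
  by (induction X Y rule: hamming_dist.induct) auto

lemma hamming_dist_commute: "hamming_dist X Y = hamming_dist Y X"
  by (induction X Y rule: hamming_dist.induct) auto

lemma hamming_dist_self [simp]: "hamming_dist X X = 0"
  by (induction X) auto

lemma hamming_dist_list_update:
  "i < length X \<Longrightarrow> hamming_dist X (X[i := a]) = (if X ! i = a then 0 else 1)"
  by (induction X arbitrary: i) (auto split: nat.splits)

lemma hamming_dist_eq_card:
  "length X = length Y \<Longrightarrow> hamming_dist X Y = card {i. i < length X \<and> X ! i \<noteq> Y ! i}"
proof (induction X Y rule: list_induct2)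
  case (Cons x xs y ys)
  have "{i. i < length (x # xs) \<and> (x # xs) ! i \<noteq> (y # ys) ! i} =
      (if x = y then {} else {0}) \<union> Suc ` {i. i < length xs \<and> xs ! i \<noteq> ys ! i}"
    (is "?L = ?R")
  proof (rule set_eqI)
    show "i \<in> ?L \<longleftrightarrow> i \<in> ?R" for i by (cases i) auto
  qed
  then show ?case using Cons by (simp add: card_image)
qed simp

lemma differ_one_iff_hamming_dist:
  "differ_one X Y \<longleftrightarrow> length X = length Y \<and> hamming_dist X Y = 1"
  unfolding differ_one_def using hamming_dist_eq_card by auto

lemma differ_one_commute: "differ_one X Y \<longleftrightarrow> differ_one Y X"
  using hamming_dist_commute by (auto simp: differ_one_iff_hamming_dist)

lemma successively_differ_one_hamming_walk:
  "length X = length Y \<Longrightarrow> successively differ_one (hamming_walk X Y)"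
proof (induction X Y rule: hamming_walk.induct)
  case (1 x xs y ys)
  then have IH: "successively differ_one (map (Cons z) (hamming_walk xs ys))" for z
    by (auto simp: successively_map differ_one_iff_hamming_dist elim!: successively_mono)
  have "x \<noteq> y \<Longrightarrow> differ_one (x # xs) (y # hd (hamming_walk xs ys))"
    using 1 by (simp add: differ_one_iff_hamming_dist)
  then show ?case
    using IH[of x] IH[of y] by (cases "hamming_walk xs ys") (auto simp: successively_Cons)
qed auto

lemma hamming_dist_via_walk:
  "Z \<in> set (hamming_walk X Y) \<Longrightarrow> length X = length Y \<Longrightarrow>
   hamming_dist X Z + hamming_dist Z Y = hamming_dist X Y"
  by (induction X Y arbitrary: Z rule: hamming_walk.induct) (auto split: if_splits)

lemma hamming_walk_eq_if_dist_eq: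
  "Z1 \<in> set (hamming_walk X Y) \<Longrightarrow> Z2 \<in> set (hamming_walk X Y) \<Longrightarrow> length X = length Y \<Longrightarrow>
   hamming_dist X Z1 = hamming_dist X Z2 \<Longrightarrow> Z1 = Z2"
  by (induction X Y arbitrary: Z1 Z2 rule: hamming_walk.induct) (auto split: if_splits)

lemma hamming_walk_eq_if_near_end:
  assumes "Z1 \<in> set (hamming_walk X Y)" "Z2 \<in> set (hamming_walk X Y)" "length X = length Y"
    and "W \<in> {X, Y}" "hamming_dist W Z1 = 1" "hamming_dist W Z2 = 1"
  shows "Z1 = Z2"
  using assms hamming_dist_via_walk[OF assms(1,3)] hamming_dist_via_walk[OF assms(2,3)]
    hamming_walk_eq_if_dist_eq[OF assms(1-3)] hamming_dist_commute[of Y]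
  by auto

text \<open>The \<open>2k\<close> neighbours of a ternary string of length \<open>k\<close>, numbered by \<open>m < 2k\<close>.\<close>

definition tern_nbr :: "nat list \<Rightarrow> nat \<Rightarrow> nat list" where
  "tern_nbr X m = X[m div 2 := (X ! (m div 2) + m mod 2 + 1) mod 3]"

lemma
  assumes "tern k X" "m < 2 * k"
  shows tern_tern_nbr: "tern k (tern_nbr X m)"
    and hamming_dist_tern_nbr: "hamming_dist X (tern_nbr X m) = 1"
proof -
  have pos: "m div 2 < length X" and letter: "X ! (m div 2) < 3"
    using assms by (auto simp: tern_def)
  have "set (tern_nbr X m) \<subseteq> insert ((X ! (m div 2) + m mod 2 + 1) mod 3) (set X)"
    unfolding tern_nbr_def by (rule set_update_subset_insert)
  then show "tern k (tern_nbr X m)"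
    using assms by (auto simp: tern_def tern_nbr_def)
  have "(x + b + 1) mod 3 \<noteq> x" if "x < 3" "b < 2" for x b :: nat
    using that by presburger
  then have "(X ! (m div 2) + m mod 2 + 1) mod 3 \<noteq> X ! (m div 2)"
    using letter by simp
  then show "hamming_dist X (tern_nbr X m) = 1"
    using pos by (simp add: tern_nbr_def hamming_dist_list_update)
qed

lemma differ_one_tern_nbr:
  assumes "tern k X" "m < 2 * k"
  shows "differ_one X (tern_nbr X m)" "differ_one (tern_nbr X m) X"
  using hamming_dist_tern_nbr[OF assms] hamming_dist_commute[of X]
  by (simp_all add: differ_one_iff_hamming_dist tern_nbr_def)

lemma tern_nbr_neq: "tern k X \<Longrightarrow> m < 2 * k \<Longrightarrow> tern_nbr X m \<noteq> X"
  using hamming_dist_tern_nbr by fastforce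

lemmas tern_nbr = tern_tern_nbr differ_one_tern_nbr tern_nbr_neq

lemma inj_on_tern_nbr:
  assumes "tern k X"
  shows "inj_on (tern_nbr X) {..<2 * k}"
proof (rule inj_onI)
  fix m m' assume "m \<in> {..<2 * k}" "m' \<in> {..<2 * k}" and eq: "tern_nbr X m = tern_nbr X m'"
  then have pos: "m div 2 < length X" "m' div 2 < length X" and letter: "X ! (m div 2) < 3"
    using assms by (auto simp: tern_def)
  have "tern_nbr X m ! (m div 2) \<noteq> X ! (m div 2)"
    using hamming_dist_tern_nbr[OF assms, of m] pos(1) \<open>m \<in> {..<2 * k}\<close>
    by (auto simp: tern_nbr_def hamming_dist_list_update split: if_splits)
  then have same_pos: "m div 2 = m' div 2"
    using eq by (metis tern_nbr_def nth_list_update_neq)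
  then have letters: "(X ! (m div 2) + m mod 2 + 1) mod 3 = (X ! (m div 2) + m' mod 2 + 1) mod 3"
    using eq pos unfolding tern_nbr_def by (metis nth_list_update_eq)
  have shift_inj: "b = b'" if "(x + b + 1) mod 3 = (x + b' + 1) mod 3" "x < 3" "b < 2" "b' < 2"
    for x b b' :: nat
    using that by presburger
  have "m mod 2 = m' mod 2"
    using shift_inj[OF letters letter] by simp
  with same_pos show "m = m'"
    by (metis div_mult_mod_eq)
qed

lemma tern_nbr_family:
  assumes "tern n X" "k \<le> 2 * n"
  obtains N where
    "\<And>m. m < k \<Longrightarrow> tern n (N m) \<and> differ_one X (N m) \<and> differ_one (N m) X \<and> N m \<noteq> X"
    "\<And>m m'. m < k \<Longrightarrow> m' < k \<Longrightarrow> m \<noteq> m' \<Longrightarrow> N m \<noteq> N m'"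
proof (rule that[of "tern_nbr X"])
  show "tern n (tern_nbr X m) \<and> differ_one X (tern_nbr X m) \<and> differ_one (tern_nbr X m) X \<and>
      tern_nbr X m \<noteq> X" if "m < k" for m
    using tern_nbr[OF assms(1)] that assms(2) by simp
  show "tern_nbr X m \<noteq> tern_nbr X m'" if "m < k" "m' < k" "m \<noteq> m'" for m m'
    using inj_on_tern_nbr[OF assms(1)] that assms(2) by (auto dest: inj_onD)
qed

lemma tern_nbrs_off_hamming_walk:
  assumes "tern s X" "tern s Y" "W \<in> {X, Y}" "k < 2 * s"
  obtains N where
    "\<And>m. m < k \<Longrightarrow> tern s (N m) \<and> differ_one W (N m) \<and> differ_one (N m) W \<and> N m \<noteq> W"
    "\<And>m m'. m < k \<Longrightarrow> m' < k \<Longrightarrow> m \<noteq> m' \<Longrightarrow> N m \<noteq> N m'"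
    "\<And>m. m < k \<Longrightarrow> N m \<notin> set (hamming_walk X Y)"
proof -
  have tW: "tern s W" using assms by auto
  have "m = m'" if "m < 2 * s" "m' < 2 * s"
    "tern_nbr W m \<in> set (hamming_walk X Y)" "tern_nbr W m' \<in> set (hamming_walk X Y)" for m m'
  proof -
    have "hamming_dist W (tern_nbr W m) = 1" "hamming_dist W (tern_nbr W m') = 1"
      using tW that(1,2) by (simp_all add: hamming_dist_tern_nbr)
    moreover have "length X = length Y"
      using assms(1,2) by (simp add: tern_def)
    ultimately have "tern_nbr W m = tern_nbr W m'"
      using hamming_walk_eq_if_near_end[OF that(3,4) _ assms(3)] by blast
    then show ?thesis
      using inj_on_tern_nbr[OF tW] that(1,2) by (auto dest: inj_onD)
  qed
  then obtain b where off: "\<And>m. m < 2 * s \<Longrightarrow> m \<noteq> b \<Longrightarrow> tern_nbr W m \<notin> set (hamming_walk X Y)"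
    by blast
  define j where "j m = (if m < b then m else Suc m)" for m
  have j: "j m < 2 * s" "j m \<noteq> b" if "m < k" for m
    using that assms(4) by (auto simp: j_def)
  show thesis
  proof (rule that[of "tern_nbr W \<circ> j"])
    show "tern s ((tern_nbr W \<circ> j) m) \<and> differ_one W ((tern_nbr W \<circ> j) m) \<and>
        differ_one ((tern_nbr W \<circ> j) m) W \<and> (tern_nbr W \<circ> j) m \<noteq> W" if "m < k" for m
      using tern_nbr[OF tW] j[OF that] by simp
    show "(tern_nbr W \<circ> j) m \<noteq> (tern_nbr W \<circ> j) m'" if "m < k" "m' < k" "m \<noteq> m'" for m m'
      using inj_on_tern_nbr[OF tW] j[OF that(1)] j[OF that(2)] that(3)
      by (auto simp: j_def dest: inj_onD split: if_splits)
    show "(tern_nbr W \<circ> j) m \<notin> set (hamming_walk X Y)" if "m < k" for m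
      using off j[OF that] by simp
  qed
qed

lemma e3c_path_iff:
  "e3c_path r s t u v p \<longleftrightarrow> p \<noteq> [] \<and> hd p = u \<and> last p = v \<and> distinct p \<and>
     (\<forall>x\<in>set p. e3c_vert r s t x) \<and> successively (e3c_adj r s t) p"
  unfolding e3c_path_def successively_conv_nth by blast

lemma e3c_adj_commute: "e3c_adj r s t x y \<longleftrightarrow> e3c_adj r s t y x"
  unfolding e3c_adj_def by (auto split: prod.splits simp: differ_one_commute)

lemma e3c_path_rev: "e3c_path r s t u v p \<Longrightarrow> e3c_path r s t v u (rev p)"
  using e3c_adj_commute[of r s t]
  by (auto simp: e3c_path_iff hd_rev last_rev successively_rev elim: successively_mono)

lemma e3c_path_splice:
  assumes pre: "e3c_path r s t u x (pre @ [x])" and w: "e3c_path r s t x y w"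
    and post: "e3c_path r s t y v (y # post)"
    and "set pre \<inter> set w = {}" "set w \<inter> set post = {}" "set pre \<inter> set post = {}"
  shows "e3c_path r s t u v (pre @ w @ post)"
    and "path_len (pre @ w @ post) = length pre + path_len w + length post"
proof -
  have w': "w \<noteq> []" "hd w = x" "last w = y"
    using w by (auto simp: e3c_path_iff)
  have "successively (e3c_adj r s t) pre" "pre \<noteq> [] \<Longrightarrow> e3c_adj r s t (last pre) x"
    using pre by (auto simp: e3c_path_iff successively_append_iff)
  moreover have "successively (e3c_adj r s t) post" "post \<noteq> [] \<Longrightarrow> e3c_adj r s t y (hd post)"
    using post by (auto simp: e3c_path_iff successively_Cons split: list.splits)
  ultimately have "successively (e3c_adj r s t) (pre @ w @ post)"
    using w w' by (auto simp: e3c_path_iff successively_append_iff)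
  moreover have "hd (pre @ w @ post) = u" "last (pre @ w @ post) = v"
    using pre post w' by (auto simp: e3c_path_iff hd_append last_append)
  ultimately show "e3c_path r s t u v (pre @ w @ post)"
    using assms w' by (auto simp: e3c_path_iff)
  show "path_len (pre @ w @ post) = length pre + path_len w + length post"
    using w'(1) by (cases w) (simp_all add: path_len_def)
qed

lemma not_e3c_adj_diff_B_diff_layer:
  "B \<noteq> B' \<Longrightarrow> d \<noteq> d' \<Longrightarrow> \<not> e3c_adj r s t (A, B, C, d) (A', B', C', d')"
  by (simp add: e3c_adj_def)

lemma e3c_path_inner_vertex:
  assumes "e3c_path r s t u v p" "u \<noteq> v" "\<not> e3c_adj r s t u v"
  shows "\<not> set p \<subseteq> {u, v}"
proof
  assume sub: "set p \<subseteq> {u, v}"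
  have p: "p \<noteq> []" "hd p = u" "last p = v" "distinct p" "successively (e3c_adj r s t) p"
    using assms(1) by (auto simp: e3c_path_iff)
  have "length p = card (set p)"
    using distinct_card[OF p(4)] by simp
  also have "\<dots> \<le> card {u, v}"
    using sub by (intro card_mono) simp_all
  finally have "length p \<le> 2"
    using assms(2) by simp
  with p(1) have "length p = 1 \<or> length p = 2"
    using length_greater_0_conv[of p] by linarith
  then show False
    using p assms(2,3) by (auto simp: length_Suc_conv numeral_2_eq_2)
qed

definition layer1_walk :: "nat list \<Rightarrow> nat list \<Rightarrow> nat list \<Rightarrow> nat list \<Rightarrow> e3v list" where
  "layer1_walk A C X Y = map (\<lambda>Z. (A, Z, C, 1)) (hamming_walk X Y)"

lemma mem_layer1_walk [simp]:
  "(A', Z, C', d) \<in> set (layer1_walk A C X Y) \<longleftrightarrow>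
   A' = A \<and> C' = C \<and> d = 1 \<and> Z \<in> set (hamming_walk X Y)"
  by (auto simp: layer1_walk_def)

lemma
  assumes "tern r A" "tern s X" "tern s Y" "tern t C"
  shows e3c_path_layer1_walk: "e3c_path r s t (A, X, C, 1) (A, Y, C, 1) (layer1_walk A C X Y)"
    and path_len_layer1_walk: "path_len (layer1_walk A C X Y) \<le> s"
proof -
  have len: "length X = length Y" using assms by (simp add: tern_def)
  have vert: "e3c_vert r s t (A, Z, C, 1)" if "Z \<in> set (hamming_walk X Y)" for Z
    using assms set_hamming_walk[OF that len] by (auto simp: e3c_vert_def tern_def)
  have "successively (\<lambda>Z Z'. e3c_adj r s t (A, Z, C, 1) (A, Z', C, 1)) (hamming_walk X Y)"
    using successively_differ_one_hamming_walk[OF len]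
  proof (rule successively_mono)
    fix Z Z' assume "Z \<in> set (hamming_walk X Y)" "Z' \<in> set (hamming_walk X Y)" "differ_one Z Z'"
    then show "e3c_adj r s t (A, Z, C, 1) (A, Z', C, 1)"
      using vert by (auto simp: e3c_adj_def differ_one_iff_hamming_dist)
  qed
  then show "e3c_path r s t (A, X, C, 1) (A, Y, C, 1) (layer1_walk A C X Y)"
    using vert len
    by (auto simp: e3c_path_iff layer1_walk_def hd_map last_map last_hamming_walk
        successively_map distinct_map distinct_hamming_walk inj_on_def)
  show "path_len (layer1_walk A C X Y) \<le> s"
    using hamming_dist_le_length[of X Y] assms(2) len
    by (simp add: path_len_def layer1_walk_def length_hamming_walk tern_def)
qed

lemma e3c_path_through_layer1_walk:
  assumes "tern r A" "tern s X" "tern s Y" "tern t C"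
    and "e3c_path r s t u (A, X, C, 1) (pre @ [(A, X, C, 1)])"
    and "e3c_path r s t (A, Y, C, 1) v ((A, Y, C, 1) # post)"
    and "set pre \<inter> set (layer1_walk A C X Y) = {}" "set (layer1_walk A C X Y) \<inter> set post = {}"
    and "set pre \<inter> set post = {}" "length pre + s + length post \<le> L"
  shows "e3c_path r s t u v (pre @ layer1_walk A C X Y @ post) \<and>
    path_len (pre @ layer1_walk A C X Y @ post) \<le> L"
  using e3c_path_splice[OF assms(5) e3c_path_layer1_walk[OF assms(1-4)] assms(6-9)]
    path_len_layer1_walk[OF assms(1-4)] assms(10) by simp

definition e3c_mirror :: "e3v \<Rightarrow> e3v" where
  "e3c_mirror x = (case x of (A, B, C, d) \<Rightarrow> (C, B, A, 2 - d))"

lemma e3c_vert_mirror: "e3c_vert r s t x \<Longrightarrow> e3c_vert t s r (e3c_mirror x)"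
  by (auto simp: e3c_vert_def e3c_mirror_def split: prod.splits)

lemma e3c_mirror_mirror: "e3c_vert r s t x \<Longrightarrow> e3c_mirror (e3c_mirror x) = x"
  by (auto simp: e3c_vert_def e3c_mirror_def split: prod.splits)

lemma e3c_adj_mirror:
  assumes "e3c_adj r s t x y"
  shows "e3c_adj t s r (e3c_mirror x) (e3c_mirror y)"
proof -
  have "e3c_vert r s t x" "e3c_vert r s t y" "x \<noteq> y"
    using assms by (auto simp: e3c_adj_def)
  then have "e3c_mirror x \<noteq> e3c_mirror y"
    by (metis e3c_mirror_mirror)
  then show ?thesis
    using assms by (auto simp: e3c_adj_def e3c_mirror_def e3c_vert_def split: prod.splits)
qed

lemma e3c_path_mirror:
  assumes "e3c_path r s t u v p"
  shows "e3c_path t s r (e3c_mirror u) (e3c_mirror v) (map e3c_mirror p)"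
proof -
  have "inj_on e3c_mirror (set p)"
    using assms by (metis e3c_path_iff e3c_mirror_mirror inj_on_inverseI)
  then show ?thesis
    using assms e3c_vert_mirror e3c_adj_mirror
    by (auto simp: e3c_path_iff hd_map last_map distinct_map successively_map
        elim: successively_mono)
qed

definition short_disjoint_paths ::
    "nat \<Rightarrow> nat \<Rightarrow> nat \<Rightarrow> e3v \<Rightarrow> e3v \<Rightarrow> nat \<Rightarrow> nat \<Rightarrow> e3v list set \<Rightarrow> bool" where
  "short_disjoint_paths r s t u v k L P \<longleftrightarrow> finite P \<and> card P = k \<and> internally_disjoint u v P \<and>
     (\<forall>p\<in>P. e3c_path r s t u v p \<and> path_len p \<le> L)"

lemma short_disjoint_paths_image:
  assumes "finite I" "u \<noteq> v" "\<not> e3c_adj r s t u v"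
    and "\<And>i. i \<in> I \<Longrightarrow> e3c_path r s t u v (f i) \<and> path_len (f i) \<le> L"
    and "\<And>i j. i \<in> I \<Longrightarrow> j \<in> I \<Longrightarrow> i \<noteq> j \<Longrightarrow> set (f i) \<inter> set (f j) \<subseteq> {u, v}"
  shows "short_disjoint_paths r s t u v (card I) L (f ` I)"
proof -
  have "inj_on f I"
  proof (rule inj_onI)
    fix i j assume "i \<in> I" "j \<in> I" "f i = f j"
    then show "i = j"
      using assms(4,5)[of i] e3c_path_inner_vertex[OF _ assms(2,3)] by fastforce
  qed
  then show ?thesis
    using assms by (auto simp: short_disjoint_paths_def internally_disjoint_def card_image)
qed

lemma short_disjoint_paths_insert:
  assumes "short_disjoint_paths r s t u v k L P" "u \<noteq> v" "\<not> e3c_adj r s t u v"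
    and "e3c_path r s t u v p" "path_len p \<le> L" "\<forall>q\<in>P. set p \<inter> set q \<subseteq> {u, v}"
  shows "short_disjoint_paths r s t u v (Suc k) L (insert p P)"
proof -
  have "p \<notin> P"
    using assms(6) e3c_path_inner_vertex[OF assms(4,2,3)] by auto
  then show ?thesis
    using assms by (auto simp: short_disjoint_paths_def internally_disjoint_def)
qed

lemma short_disjoint_paths_three_and_family:
  assumes "u \<noteq> v" "\<not> e3c_adj r s t u v"
    and "\<forall>p\<in>{P1, P2, P3}. e3c_path r s t u v p \<and> path_len p \<le> L"
    and "\<And>m. m < k \<Longrightarrow> e3c_path r s t u v (Q m) \<and> path_len (Q m) \<le> L"
    and "set P1 \<inter> set P2 \<subseteq> {u, v}" "set P1 \<inter> set P3 \<subseteq> {u, v}" "set P2 \<inter> set P3 \<subseteq> {u, v}"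
    and "\<And>m. m < k \<Longrightarrow> \<forall>p\<in>{P1, P2, P3}. set p \<inter> set (Q m) \<subseteq> {u, v}"
    and "\<And>m m'. m < k \<Longrightarrow> m' < k \<Longrightarrow> m \<noteq> m' \<Longrightarrow> set (Q m) \<inter> set (Q m') \<subseteq> {u, v}"
  shows "short_disjoint_paths r s t u v (k + 3) L (insert P1 (insert P2 (insert P3 (Q ` {..<k}))))"
proof -
  have "short_disjoint_paths r s t u v k L (Q ` {..<k})"
    using short_disjoint_paths_image[of "{..<k}", OF _ assms(1,2), of Q] assms(4,9) by simp
  then have "short_disjoint_paths r s t u v (Suc (Suc (Suc k))) L
      (insert P1 (insert P2 (insert P3 (Q ` {..<k}))))"
    using assms by (intro short_disjoint_paths_insert) (auto simp: Int_commute)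
  then show ?thesis
    by (simp add: numeral_3_eq_3)
qed

lemma short_disjoint_paths_rev:
  assumes "short_disjoint_paths r s t u v k L P"
  shows "short_disjoint_paths r s t v u k L (rev ` P)"
proof -
  have "card (rev ` P) = card P"
    by (rule card_image) (simp add: inj_on_def)
  then show ?thesis
    using assms by (auto simp: short_disjoint_paths_def internally_disjoint_def path_len_def
        intro: e3c_path_rev)
qed

lemma short_disjoint_paths_mirror:
  assumes "short_disjoint_paths r s t u v k L P"
  shows "short_disjoint_paths t s r (e3c_mirror u) (e3c_mirror v) k L (map e3c_mirror ` P)"
proof -
  have paths: "e3c_path r s t u v p" if "p \<in> P" for p
    using assms that by (simp add: short_disjoint_paths_def)
  have involution: "map e3c_mirror (map e3c_mirror p) = p" if "p \<in> P" for p
    using paths[OF that] unfolding map_map e3c_path_iff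
    by (metis comp_apply e3c_mirror_mirror map_idI)
  have "inj_on (map e3c_mirror) P"
    by (metis involution inj_on_inverseI)
  moreover have "set (map e3c_mirror p) \<inter> set (map e3c_mirror q) \<subseteq> {e3c_mirror u, e3c_mirror v}"
    if "p \<in> P" "q \<in> P" "p \<noteq> q" for p q
  proof -
    have "inj_on e3c_mirror (set p \<union> set q)"
      using paths that by (metis Un_iff e3c_path_iff e3c_mirror_mirror inj_on_inverseI)
    then have "set (map e3c_mirror p) \<inter> set (map e3c_mirror q) = e3c_mirror ` (set p \<inter> set q)"
      by (simp add: inj_on_image_Int)
    also have "\<dots> \<subseteq> e3c_mirror ` {u, v}"
      using assms that
      by (intro image_mono) (auto simp: short_disjoint_paths_def internally_disjoint_def)
    finally show ?thesis
      by simp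
  qed
  ultimately show ?thesis
    using assms e3c_path_mirror
    by (auto simp: short_disjoint_paths_def internally_disjoint_def path_len_def card_image)
qed

lemma short_disjoint_paths_layers_01:
  assumes tA: "tern r A" and tB: "tern s B" and tB': "tern s B'" and tC: "tern t C"
    and "B \<noteq> B'" "0 < r" "k < 2 * s" "k < 2 * t"
  shows "\<exists>P. short_disjoint_paths r s t (A, B, C, 0) (A, B', C, 1) (k + 3) (s + 6) P"
proof -
  define u where "u = (A, B, C, 0::nat)"
  define v where "v = (A, B', C, 1::nat)"
  define A2 where "A2 = tern_nbr A 0"
  have A2: "tern r A2" "differ_one A A2" "differ_one A2 A" "A2 \<noteq> A"
    using tern_nbr[OF tA] assms(6) unfolding A2_def by auto
  obtain Cn where
    Cn: "\<And>m. m < Suc k \<Longrightarrow> tern t (Cn m) \<and> differ_one C (Cn m) \<and> differ_one (Cn m) C \<and> Cn m \<noteq> C"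
    and Cn_inj: "\<And>m m'. m < Suc k \<Longrightarrow> m' < Suc k \<Longrightarrow> m \<noteq> m' \<Longrightarrow> Cn m \<noteq> Cn m'"
    using tern_nbr_family[OF tC Suc_leI[OF assms(8)]] by blast
  \<comment> \<open>off the walk, so that the vertex \<open>(A, Bn m, C, 1)\<close> of \<open>Q m\<close> avoids \<open>P1\<close>\<close>
  obtain Bn where
    Bn: "\<And>m. m < k \<Longrightarrow> tern s (Bn m) \<and> differ_one B' (Bn m) \<and> differ_one (Bn m) B' \<and> Bn m \<noteq> B'"
    and Bn_inj: "\<And>m m'. m < k \<Longrightarrow> m' < k \<Longrightarrow> m \<noteq> m' \<Longrightarrow> Bn m \<noteq> Bn m'"
    and Bn_off: "\<And>m. m < k \<Longrightarrow> Bn m \<notin> set (hamming_walk B B')"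
    using tern_nbrs_off_hamming_walk[OF tB tB' _ assms(7), of B'] by blast
  have walk_ends: "B \<in> set (hamming_walk B B')" "B' \<in> set (hamming_walk B B')"
    using tB tB' ends_in_hamming_walk by (simp_all add: tern_def)
  define P1 where "P1 = u # layer1_walk A C B B'"
  define P2 where "P2 = [u, (A, B, C, 2), (A2, B, C, 2)] @ layer1_walk A2 C B B' @
    [(A2, B', C, 2), (A, B', C, 2), v]"
  define P3 where "P3 = [u, (A, B, Cn k, 0)] @ layer1_walk A (Cn k) B B' @
    [(A, B', Cn k, 0), (A, B', C, 0), v]"
  define Q where "Q m = [u, (A, B, Cn m, 0)] @ layer1_walk A (Cn m) B (Bn m) @
    [(A, Bn m, Cn m, 0), (A, Bn m, C, 0), (A, Bn m, C, 1), v]" for m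
  note e3c_simps = e3c_path_iff e3c_adj_def e3c_vert_def u_def v_def
  have uv: "u \<noteq> v" "\<not> e3c_adj r s t u v"
    using \<open>B \<noteq> B'\<close> by (simp_all add: u_def v_def not_e3c_adj_diff_B_diff_layer)
  have "e3c_path r s t u v ([u] @ layer1_walk A C B B' @ []) \<and>
      path_len ([u] @ layer1_walk A C B B' @ []) \<le> s + 6"
    using tA tB tB' tC by (intro e3c_path_through_layer1_walk) (auto simp: e3c_simps)
  then have P1: "e3c_path r s t u v P1 \<and> path_len P1 \<le> s + 6"
    by (simp add: P1_def)
  have P2: "e3c_path r s t u v P2 \<and> path_len P2 \<le> s + 6"
    unfolding P2_def using A2 tA tB tB' tC \<open>B \<noteq> B'\<close>
    by (intro e3c_path_through_layer1_walk) (auto simp: e3c_simps)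
  have P3: "e3c_path r s t u v P3 \<and> path_len P3 \<le> s + 6"
    unfolding P3_def using Cn[of k] tA tB tB' tC \<open>B \<noteq> B'\<close>
    by (intro e3c_path_through_layer1_walk) (auto simp: e3c_simps)
  have Q: "e3c_path r s t u v (Q m) \<and> path_len (Q m) \<le> s + 6" if "m < k" for m
    unfolding Q_def using Cn[of m] Bn[OF that] Bn_off[OF that] walk_ends that tA tB tB' tC
    by (intro e3c_path_through_layer1_walk) (auto simp: e3c_simps)
  have disjoint_QQ: "set (Q m) \<inter> set (Q m') \<subseteq> {u, v}" if "m < k" "m' < k" "m \<noteq> m'" for m m'
    unfolding Q_def u_def v_def using that Cn[of m] Cn[of m'] Cn_inj[of m m'] Bn[of m] Bn[of m']
      Bn_inj[of m m'] by auto
  have disjoint_PP: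
    "set P1 \<inter> set P2 \<subseteq> {u, v}" "set P1 \<inter> set P3 \<subseteq> {u, v}" "set P2 \<inter> set P3 \<subseteq> {u, v}"
    unfolding P1_def P2_def P3_def u_def v_def using A2 Cn[of k] by auto
  have disjoint_PQ: "\<forall>p\<in>{P1, P2, P3}. set p \<inter> set (Q m) \<subseteq> {u, v}" if "m < k" for m
    unfolding P1_def P2_def P3_def Q_def u_def v_def
    using that A2 Cn[of k] Cn[of m] Cn_inj[of k m] Bn[of m] Bn_off[of m] walk_ends by auto
  have "short_disjoint_paths r s t u v (k + 3) (s + 6)
      (insert P1 (insert P2 (insert P3 (Q ` {..<k}))))"
    using P1 P2 P3 Q disjoint_PP disjoint_PQ disjoint_QQ
    by (intro short_disjoint_paths_three_and_family uv) auto
  then show ?thesis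
    unfolding u_def v_def by blast
qed

lemma short_disjoint_paths_layers_02:
  assumes tA: "tern r A" and tB: "tern s B" and tB': "tern s B'" and tC: "tern t C"
    and "B \<noteq> B'" "k < 2 * r" "k < 2 * t"
  shows "\<exists>P. short_disjoint_paths r s t (A, B, C, 0) (A, B', C, 2) (k + 3) (s + 8) P"
proof -
  define u where "u = (A, B, C, 0::nat)"
  define v where "v = (A, B', C, 2::nat)"
  have uv: "u \<noteq> v" "\<not> e3c_adj r s t u v"
    using \<open>B \<noteq> B'\<close> by (simp_all add: u_def v_def not_e3c_adj_diff_B_diff_layer)
  obtain An where
    An: "\<And>m. m < Suc k \<Longrightarrow> tern r (An m) \<and> differ_one A (An m) \<and> differ_one (An m) A \<and> An m \<noteq> A"
    and An_inj: "\<And>m m'. m < Suc k \<Longrightarrow> m' < Suc k \<Longrightarrow> m \<noteq> m' \<Longrightarrow> An m \<noteq> An m'"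
    using tern_nbr_family[OF tA Suc_leI[OF assms(6)]] by blast
  obtain Cn where
    Cn: "\<And>m. m < Suc k \<Longrightarrow> tern t (Cn m) \<and> differ_one C (Cn m) \<and> differ_one (Cn m) C \<and> Cn m \<noteq> C"
    and Cn_inj: "\<And>m m'. m < Suc k \<Longrightarrow> m' < Suc k \<Longrightarrow> m \<noteq> m' \<Longrightarrow> Cn m \<noteq> Cn m'"
    using tern_nbr_family[OF tC Suc_leI[OF assms(7)]] by blast
  define P1 where "P1 = [u] @ layer1_walk A C B B' @ [v]"
  define P2 where "P2 = [u, (A, B, Cn k, 0)] @ layer1_walk A (Cn k) B B' @
    [(A, B', Cn k, 0), (A, B', C, 0), v]"
  define P3 where "P3 = [u, (A, B, C, 2), (An k, B, C, 2)] @ layer1_walk (An k) C B B' @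
    [(An k, B', C, 2), v]"
  define Q where "Q m = [u, (A, B, Cn m, 0)] @ layer1_walk A (Cn m) B B' @
    [(A, B', Cn m, 2), (An m, B', Cn m, 2), (An m, B', Cn m, 0), (An m, B', C, 0),
     (An m, B', C, 2), v]" for m
  note e3c_simps = e3c_path_iff e3c_adj_def e3c_vert_def u_def v_def
  have P1: "e3c_path r s t u v P1 \<and> path_len P1 \<le> s + 8"
    unfolding P1_def using tA tB tB' tC
    by (intro e3c_path_through_layer1_walk) (auto simp: e3c_simps)
  have P2: "e3c_path r s t u v P2 \<and> path_len P2 \<le> s + 8"
    unfolding P2_def using Cn[of k] tA tB tB' tC \<open>B \<noteq> B'\<close>
    by (intro e3c_path_through_layer1_walk) (auto simp: e3c_simps)
  have P3: "e3c_path r s t u v P3 \<and> path_len P3 \<le> s + 8"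
    unfolding P3_def using An[of k] tA tB tB' tC \<open>B \<noteq> B'\<close>
    by (intro e3c_path_through_layer1_walk) (auto simp: e3c_simps)
  have Q: "e3c_path r s t u v (Q m) \<and> path_len (Q m) \<le> s + 8" if "m < k" for m
    unfolding Q_def using An[of m] Cn[of m] that tA tB tB' tC \<open>B \<noteq> B'\<close>
    by (intro e3c_path_through_layer1_walk) (auto simp: e3c_simps)
  have disjoint_QQ: "set (Q m) \<inter> set (Q m') \<subseteq> {u, v}" if "m < k" "m' < k" "m \<noteq> m'" for m m'
    unfolding Q_def u_def v_def using that An[of m] An[of m'] An_inj[of m m'] Cn[of m] Cn[of m']
      Cn_inj[of m m'] by auto
  have disjoint_PP:
    "set P1 \<inter> set P2 \<subseteq> {u, v}" "set P1 \<inter> set P3 \<subseteq> {u, v}" "set P2 \<inter> set P3 \<subseteq> {u, v}"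
    unfolding P1_def P2_def P3_def u_def v_def using An[of k] Cn[of k] \<open>B \<noteq> B'\<close> by auto
  have disjoint_PQ: "\<forall>p\<in>{P1, P2, P3}. set p \<inter> set (Q m) \<subseteq> {u, v}" if "m < k" for m
    unfolding P1_def P2_def P3_def Q_def u_def v_def
    using that An[of k] An[of m] An_inj[of k m] Cn[of k] Cn[of m] Cn_inj[of k m] \<open>B \<noteq> B'\<close>
    by auto
  have "short_disjoint_paths r s t u v (k + 3) (s + 8)
      (insert P1 (insert P2 (insert P3 (Q ` {..<k}))))"
    using P1 P2 P3 Q disjoint_PP disjoint_PQ disjoint_QQ
    by (intro short_disjoint_paths_three_and_family uv) auto
  then show ?thesis
    unfolding u_def v_def by blast
qed

lemma short_disjoint_paths_ordered_layers:
  assumes "1 \<le> r" "r \<le> s" "s \<le> t"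
    and tA: "tern r A" and tB: "tern s B" and tB': "tern s B'" and tC: "tern t C"
    and "B \<noteq> B'" "d < d'" "d' < 3"
  shows "\<exists>P. short_disjoint_paths r s t (A, B, C, d) (A, B', C, d') (2 * r + 2)
    (if d = 0 \<and> d' = 2 then s + 8 else s + 6) P"
proof -
  have count: "2 * r - 1 + 3 = 2 * r + 2"
    and bounds: "2 * r - 1 < 2 * r" "2 * r - 1 < 2 * s" "2 * r - 1 < 2 * t"
    using assms(1-3) by linarith+
  consider "d = 0" "d' = 1" | "d = 1" "d' = 2" | "d = 0" "d' = 2"
    using assms(9,10) by linarith
  then show ?thesis
  proof cases
    case 1
    then show ?thesis
      using short_disjoint_paths_layers_01[OF tA tB tB' tC \<open>B \<noteq> B'\<close> _ bounds(2,3)] assms(1) count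
      by simp
  next
    case 2
    obtain P where "short_disjoint_paths t s r (C, B', A, 0) (C, B, A, 1) (2 * r + 2) (s + 6) P"
      using short_disjoint_paths_layers_01[OF tC tB' tB tA _ _ bounds(2,1)] \<open>B \<noteq> B'\<close>
        assms(1-3) count
      by fastforce
    from short_disjoint_paths_rev[OF short_disjoint_paths_mirror[OF this]] show ?thesis
      using 2 by (auto simp: e3c_mirror_def)
  next
    case 3
    then show ?thesis
      using short_disjoint_paths_layers_02[OF tA tB tB' tC \<open>B \<noteq> B'\<close> bounds(1,3)] count by simp
  qed
qed

theorem lemma16:
  fixes r s t :: nat and A B C A' B' C' :: "nat list" and d d' :: nat
  assumes "1 \<le> r" "r \<le> s" "s \<le> t"
    and "e3c_vert r s t (A, B, C, d)" and "e3c_vert r s t (A', B', C', d')"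
    and "A = A'" "B \<noteq> B'" "C = C'" "d \<noteq> d'"
  shows "\<exists>P. finite P \<and> card P = 2 * r + 2 \<and>
     internally_disjoint (A, B, C, d) (A', B', C', d') P \<and>
     (\<forall>p\<in>P. e3c_path r s t (A, B, C, d) (A', B', C', d') p \<and>
        (({d, d'} = {0, 1} \<or> {d, d'} = {1, 2}) \<longrightarrow> path_len p \<le> s + 6) \<and>
        ({d, d'} = {0, 2} \<longrightarrow> path_len p \<le> s + 8))"
proof -
  have tern: "tern r A" "tern s B" "tern s B'" "tern t C" and "d < 3" "d' < 3"
    using assms(4-6,8) by (auto simp: e3c_vert_def)
  define L where "L = (if {d, d'} = {0, 2} then s + 8 else s + 6)"
  have "\<exists>P. short_disjoint_paths r s t (A, B, C, d) (A, B', C, d') (2 * r + 2) L P"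
  proof (cases "d < d'")
    case True
    then have "L = (if d = 0 \<and> d' = 2 then s + 8 else s + 6)"
      by (auto simp: L_def doubleton_eq_iff)
    then show ?thesis
      using short_disjoint_paths_ordered_layers[OF assms(1-3) tern assms(7) True \<open>d' < 3\<close>] by simp
  next
    case False
    then have "d' < d" "L = (if d' = 0 \<and> d = 2 then s + 8 else s + 6)"
      using assms(9) by (auto simp: L_def doubleton_eq_iff)
    then obtain P where "short_disjoint_paths r s t (A, B', C, d') (A, B, C, d) (2 * r + 2) L P"
      using short_disjoint_paths_ordered_layers[OF assms(1-3) tern(1,3,2,4) assms(7)[symmetric]
          \<open>d' < d\<close> \<open>d < 3\<close>]
      by auto
    then show ?thesis
      using short_disjoint_paths_rev by blast
  qed
  then show ?thesis
    using assms(6,8) by (auto simp: short_disjoint_paths_def L_def doubleton_eq_iff)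
qed

end
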